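(* Assume Assumption 1. Assume there is a constant $L>0$ such that for every $T^Y_0\in\mathbb{T}^Y_0$ and all $(x_1,y_1),(x_2,y_2)\in\mathcal{X}_T\times\mathcal{Y}_S$, $$\|T^Y_0(x_1,y_1)-T^Y_0(x_2,y_2)\|_{\mathcal{Y}_T}\le L\big(\|x_1-x_2\|_{\mathcal{X}_T}+\|y_1-y_2\|_{\mathcal{Y}_S}\big).$$ Assume also there are $L'>0$ and $p\ge1$ such that the output transport risk satisfies $$|\mathcal{E}^O(h_1)-\mathcal{E}^O(h_2)|\le L'\,\mathcal{W}_p\big(h_1\#Law(X_T),h_2\#Law(X_T)\big)^p$$ for all intermediate models $h_1,h_2$ (arising from any pretrained models in $A_S$). Then for every fixed $\mu\in\mathcal{P}(\mathcal{X}_S)$, the map $f\mapsto\mathcal{C}(\mu,f)$ is continuous on $(A_S,d_M)$.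
   Context: Transfer learning framework. A source task $S$ consists of an input space $\mathcal{X}_S$ and output space $\mathcal{Y}_S$ (finite-dimensional normed spaces), a random pair $(X_S,Y_S)$, a set $A_S$ of admissible models $f:\mathcal{X}_S\to\mathcal{Y}_S$ and a pretrained model $f_S^*\in A_S$. A target task $T$ has analogous $\mathcal{X}_T,\mathcal{Y}_T,(X_T,Y_T),A_T$ and optimal target model $f_T^*$. Fixed sets $\mathbb{T}^X_0$ of maps $\mathcal{X}_T\to\mathcal{X}_S$ and $\mathbb{T}^Y_0$ of maps $\mathcal{X}_T\times\mathcal{Y}_S\to\mathcal{Y}_T$ are given. For $(T^X_0,T^Y_0)$ the intermediate model is $f_{ST}(x)=T^Y_0(x,f_S^*(T^X_0(x)))$; $\mathbb{P}_T=Law(f_T^*(X_T))$, $\mathbb{P}_{ST}=Law(f_{ST}(X_T))$. An output transport risk is $\mathcal{E}^O:A_T\to\mathbb{R}$ with $\mathcal{E}^O\ge0$ and $\mathcal{E}^O(f_{ST})=0$ iff $\mathbb{P}_{ST}=\mathbb{P}_T$. An input transport risk $\mathcal{E}^I$ satisfies $\mathcal{E}^I(T^X_0)\ge0$, with equality iff $T^X_0\#Law(X_T)=Law(X_S)$. The model-specific transfer risk is $\mathcal{C}(S,T\mid f_{ST})=C(\mathcal{E}^O(f_{ST}),\mathcal{E}^I(T^X_0))$, with $C:\mathbb{R}^2\to\mathbb{R}$, $C(0,0)=0$, $C\ge0$ on relevant values, non-decreasing in each argument, and $|C(a,b)-C(a',b')|\le L_C(|a-a'|+|b-b'|)$ for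 some $L_C>0$. The transfer risk is $\mathcal{C}(S,T)=\inf_{(T^X_0,T^Y_0)\in\mathbb{T}^X_0\times\mathbb{T}^Y_0}\mathcal{C}(S,T\mid f_{ST})$. With target and transport sets fixed, a source task is $S=(\mu,f)\in\mathcal{P}(\mathcal{X}_S)\times A_S$ ($\mu=Law(X_S)$, $f=f_S^*$) and $\mathcal{C}(\mu,f):=\mathcal{C}(S,T)$. Assumption 1: $D$ is a metric on $\mathcal{P}(\mathcal{X}_S)$ and $\mathcal{E}^I(T^X_0)=D(T^X_0\#Law(X_T),\mu)$. For a fixed constant $M>0$, $d_M(f_1,f_2):=\min\{M,\sup_{x\in\mathcal{X}_S}\|f_1(x)-f_2(x)\|_{\mathcal{Y}_S}\}$ on $A_S$. $\mathcal{W}_p$ is the $p$-Wasserstein distance on probability measures on $\mathcal{Y}_T$ with finite $p$-th moment: $\mathcal{W}_p(\nu_1,\nu_2)^p=\inf_{\gamma\in\Pi(\nu_1,\nu_2)}\int\|x-y\|^p_{\mathcal{Y}_T}\,d\gamma(x,y)$. *)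

theory Defs
  imports "HOL-Analysis.Analysis" "HOL-Probability.Probability"
begin

definition fin_dim_space :: "'a::real_normed_vector itself \<Rightarrow> bool" where
  "fin_dim_space _ \<longleftrightarrow> (\<exists>B::'a set. finite B \<and> span B = UNIV)"

definition prob_measures :: "'a::topological_space measure set" where
  "prob_measures = {m. prob_space m \<and> sets m = sets (borel :: 'a measure)}"

definition couplings :: "'a::real_normed_vector measure \<Rightarrow> 'a measure \<Rightarrow> ('a \<times> 'a) measure set" where
  "couplings \<nu>1 \<nu>2 = {\<gamma>. prob_space \<gamma> \<and> sets \<gamma> = sets (borel :: ('a \<times> 'a) measure)
      \<and> distr \<gamma> borel fst = \<nu>1 \<and> distr \<gamma> borel snd = \<nu>2}"

definition wasserstein_pow :: "real \<Rightarrow> 'a::real_normed_vector measure \<Rightarrow> 'a measure \<Rightarrow> ennreal" where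
  "wasserstein_pow p \<nu>1 \<nu>2 =
     (INF \<gamma>\<in>couplings \<nu>1 \<nu>2. \<integral>\<^sup>+ z. ennreal (norm (fst z - snd z) powr p) \<partial>\<gamma>)"

definition d_M :: "real \<Rightarrow> ('a \<Rightarrow> 'b::real_normed_vector) \<Rightarrow> ('a \<Rightarrow> 'b) \<Rightarrow> real" where
  "d_M M f1 f2 = enn2real (min (ennreal M) (SUP x. ennreal (norm (f1 x - f2 x))))"

definition intermediate :: "('xt \<Rightarrow> 'xs) \<Rightarrow> ('xt \<times> 'ys \<Rightarrow> 'yt) \<Rightarrow> ('xs \<Rightarrow> 'ys) \<Rightarrow> 'xt \<Rightarrow> 'yt" where
  "intermediate TX TY f = (\<lambda>x. TY (x, f (TX x)))"

text \<open>Transfer risk C(mu,f) = inf over (T^X_0,T^Y_0) of C(E^O(f_ST), E^I(T^X_0)),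
  with E^I(T^X_0) = D(T^X_0 # Law(X_T), mu) (Assumption 1).\<close>
definition transfer_risk ::
  "(real \<Rightarrow> real \<Rightarrow> real) \<Rightarrow> (('xt \<Rightarrow> 'yt) \<Rightarrow> real) \<Rightarrow> ('xs::topological_space measure \<Rightarrow> 'xs measure \<Rightarrow> real)
   \<Rightarrow> 'xt::topological_space measure \<Rightarrow> ('xt \<Rightarrow> 'xs) set \<Rightarrow> ('xt \<times> 'ys \<Rightarrow> 'yt) set
   \<Rightarrow> 'xs measure \<Rightarrow> ('xs \<Rightarrow> 'ys) \<Rightarrow> real" where
  "transfer_risk C EO D \<nu>T TXs TYs \<mu> f =
     (INF tt\<in>TXs \<times> TYs. C (EO (intermediate (fst tt) (snd tt) f)) (D (distr \<nu>T borel (fst tt)) \<mu>))"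

end

theory Submission imports Defs begin

text \<open>The intermediate models built from two pretrained models that are uniformly \<open>d\<close>-close
  are themselves uniformly \<open>L d\<close>-close, so the coupling of their laws given by the joint
  push-forward \<open>x \<mapsto> (h\<^sub>1 x, h\<^sub>2 x)\<close> shows \<open>W\<^sub>p(h\<^sub>1#Law(X\<^sub>T), h\<^sub>2#Law(X\<^sub>T))\<^sup>p \<le> (L d)\<^sup>p\<close>.
  Hence the output risks differ by at most \<open>L' (L d)\<^sup>p\<close>, while the input risk does not depend on
  the pretrained model at all; by the Lipschitz property of \<open>C\<close> the objective changes by at most
  \<open>L\<^sub>C L' (L d)\<^sup>p\<close> uniformly over all transport pairs, and so does its infimum.\<close>

text \<open>The spaces are finite-dimensional only through \<^const>\<open>fin_dim_space\<close>, not through the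
  class \<open>second_countable_topology\<close>, so \<open>borel_prod\<close> does not apply; measurability of pairs is
  recovered from a countable dense set built from rational coordinates.\<close>

lemma fin_dim_space_countable_dense:
  assumes "fin_dim_space TYPE('a::real_normed_vector)"
  shows "\<exists>Q::'a set. countable Q \<and> (\<forall>x e. e > 0 \<longrightarrow> (\<exists>q\<in>Q. dist q x < e))"
proof -
  obtain B :: "'a set" where B: "finite B" "span B = UNIV"
    using assms unfolding fin_dim_space_def by blast
  define Q where "Q = (\<lambda>r. \<Sum>v\<in>B. real_of_rat (r v) *\<^sub>R v) ` (Pi\<^sub>E B (\<lambda>_. UNIV))"
  have "countable (Pi\<^sub>E B (\<lambda>_. UNIV :: rat set))"
    by (rule countable_PiE[OF B(1)]) auto
  then have "countable Q" unfolding Q_def by (rule countable_image)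
  moreover have "\<exists>q\<in>Q. dist q x < e" if e: "e > 0" for x :: 'a and e
  proof -
    obtain u where u: "x = (\<Sum>v\<in>B. u v *\<^sub>R v)"
      using B span_finite[OF B(1)] by auto
    define S where "S = (\<Sum>v\<in>B. norm v)"
    have S: "S \<ge> 0" unfolding S_def by (simp add: sum_nonneg)
    define \<eta> where "\<eta> = e / (1 + S)"
    have \<eta>: "\<eta> > 0" unfolding \<eta>_def using e S by simp
    have "\<exists>r::rat. \<bar>u v - real_of_rat r\<bar> < \<eta>" for v
    proof -
      obtain s where "s \<in> \<rat>" "u v - \<eta> < s" "s < u v + \<eta>"
        using Rats_dense_in_real[of "u v - \<eta>" "u v + \<eta>"] \<eta> by auto
      moreover from \<open>s \<in> \<rat>\<close> obtain r where "s = real_of_rat r" by (auto elim: Rats_cases)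
      ultimately show ?thesis by (intro exI[of _ r]) auto
    qed
    then obtain r0 where r0: "\<And>v. \<bar>u v - real_of_rat (r0 v)\<bar> < \<eta>" by metis
    define r where "r = restrict r0 B"
    let ?q = "\<Sum>v\<in>B. real_of_rat (r v) *\<^sub>R v"
    have "?q \<in> Q" unfolding Q_def by (rule rev_image_eqI[of r]) (auto simp: r_def)
    moreover have "dist ?q x < e"
    proof -
      have "dist ?q x = norm (\<Sum>v\<in>B. (real_of_rat (r v) - u v) *\<^sub>R v)"
        unfolding u dist_norm by (simp add: sum_subtractf[symmetric] scaleR_diff_left)
      also have "\<dots> \<le> (\<Sum>v\<in>B. \<eta> * norm v)"
      proof (rule sum_norm_le)
        fix v assume "v \<in> B"
        then have "\<bar>real_of_rat (r v) - u v\<bar> \<le> \<eta>" using r0[of v] unfolding r_def by simp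
        then show "norm ((real_of_rat (r v) - u v) *\<^sub>R v) \<le> \<eta> * norm v"
          by (simp add: mult_right_mono)
      qed
      also have "\<dots> = \<eta> * S" unfolding S_def by (simp add: sum_distrib_left)
      also have "\<dots> < e" unfolding \<eta>_def using e S by (simp add: divide_less_eq)
      finally show ?thesis .
    qed
    ultimately show ?thesis by blast
  qed
  ultimately show ?thesis by blast
qed

lemma open_prod_eq_Union_rational_balls:
  fixes U :: "('a::metric_space \<times> 'b::metric_space) set"
  assumes Q1: "\<And>x e. e > 0 \<Longrightarrow> \<exists>q\<in>Q1. dist q x < e"
    and Q2: "\<And>y e. e > 0 \<Longrightarrow> \<exists>q\<in>Q2. dist q y < e"
    and U: "open U"
  shows "U = (\<Union>(q1, q2, r)\<in>{(q1, q2, r). q1 \<in> Q1 \<and> q2 \<in> Q2 \<and> r \<in> \<rat> \<and> ball q1 r \<times> ball q2 r \<subseteq> U}.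
                ball q1 r \<times> ball q2 r)"
    (is "U = ?V")
proof
  show "?V \<subseteq> U" by auto
  show "U \<subseteq> ?V"
  proof
    fix z assume "z \<in> U"
    obtain x y where z: "z = (x, y)" by (cases z)
    obtain e where e: "e > 0" "ball z e \<subseteq> U" using U \<open>z \<in> U\<close> open_contains_ball by blast
    obtain q1 where q1: "q1 \<in> Q1" "dist q1 x < e/8" using Q1[of "e/8" x] e by auto
    obtain q2 where q2: "q2 \<in> Q2" "dist q2 y < e/8" using Q2[of "e/8" y] e by auto
    obtain r where r: "r \<in> \<rat>" "e/8 < r" "r < e/4" using Rats_dense_in_real[of "e/8" "e/4"] e by auto
    have "ball q1 r \<times> ball q2 r \<subseteq> ball z e"
    proof (clarsimp simp: z)
      fix x' y' assume "dist q1 x' < r" "dist q2 y' < r"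
      then have "dist x x' < e/2" "dist y y' < e/2"
        using q1 q2 r dist_triangle[of x x' q1] dist_triangle[of y y' q2] by (auto simp: dist_commute)
      moreover have "dist (x, y) (x', y') \<le> dist x x' + dist y y'"
        unfolding dist_Pair_Pair by (rule sqrt_sum_squares_le_sum) auto
      ultimately show "dist (x, y) (x', y') < e" by linarith
    qed
    moreover have "z \<in> ball q1 r \<times> ball q2 r" using z q1 q2 r by (auto simp: dist_commute)
    ultimately show "z \<in> ?V" using e(2) q1 q2 r by blast
  qed
qed

lemma fin_dim_space_measurable_Pair:
  assumes "fin_dim_space TYPE('a::real_normed_vector)" "fin_dim_space TYPE('b::real_normed_vector)"
    and u: "u \<in> borel_measurable M" and v: "v \<in> borel_measurable M"
  shows "(\<lambda>x. (u x :: 'a, v x :: 'b)) \<in> borel_measurable M"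
proof (rule borel_measurableI)
  obtain Q1 :: "'a set" where Q1: "countable Q1" "\<And>x e. e > 0 \<Longrightarrow> \<exists>q\<in>Q1. dist q x < e"
    using fin_dim_space_countable_dense[OF assms(1)] by blast
  obtain Q2 :: "'b set" where Q2: "countable Q2" "\<And>y e. e > 0 \<Longrightarrow> \<exists>q\<in>Q2. dist q y < e"
    using fin_dim_space_countable_dense[OF assms(2)] by blast
  fix U :: "('a \<times> 'b) set" assume "open U"
  define I where "I = {(q1, q2, r). q1 \<in> Q1 \<and> q2 \<in> Q2 \<and> r \<in> \<rat> \<and> ball q1 r \<times> ball q2 r \<subseteq> U}"
  have "countable I"
    by (rule countable_subset[of _ "Q1 \<times> Q2 \<times> \<rat>"]) (auto simp: I_def Q1 Q2 countable_rat)
  have "(\<lambda>x. (u x, v x)) -` U \<inter> space M =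
        (\<Union>(q1, q2, r)\<in>I. (u -` ball q1 r \<inter> space M) \<inter> (v -` ball q2 r \<inter> space M))"
    by (subst open_prod_eq_Union_rational_balls[OF Q1(2) Q2(2) \<open>open U\<close>]) (auto simp: I_def)
  also have "\<dots> \<in> sets M"
    using measurable_sets[OF u borel_open] measurable_sets[OF v borel_open]
    by (intro sets.countable_UN''[OF \<open>countable I\<close>]) auto
  finally show "(\<lambda>x. (u x, v x)) -` U \<inter> space M \<in> sets M" .
qed

lemma distr_in_prob_measures:
  assumes "N \<in> prob_measures" "h \<in> borel_measurable borel"
  shows "distr N borel h \<in> prob_measures"
proof -
  have "h \<in> borel_measurable N"
    using assms measurable_cong_sets[of N borel] unfolding prob_measures_def by auto
  then show ?thesis
    using prob_space.prob_space_distr assms(1) unfolding prob_measures_def by auto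
qed

lemma distr_Pair_in_couplings:
  assumes N: "prob_space N" and h: "(\<lambda>x. (h1 x, h2 x)) \<in> borel_measurable N"
  shows "distr N borel (\<lambda>x. (h1 x, h2 x)) \<in> couplings (distr N borel h1) (distr N borel h2)"
proof -
  have fst: "fst \<in> borel_measurable borel" and snd: "snd \<in> borel_measurable borel"
    by (intro borel_measurable_continuous_onI continuous_intros)+
  show ?thesis
    unfolding couplings_def
    by (simp add: prob_space.prob_space_distr[OF N h] distr_distr[OF fst h] distr_distr[OF snd h]
        comp_def)
qed

lemma wasserstein_pow_distr_le:
  fixes h1 h2 :: "'x \<Rightarrow> 'y::real_normed_vector"
  assumes "fin_dim_space TYPE('y)" and N: "prob_space N"
    and h: "h1 \<in> borel_measurable N" "h2 \<in> borel_measurable N"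
    and K: "\<And>x. norm (h1 x - h2 x) \<le> K" "K \<ge> 0" and p: "p \<ge> 0"
  shows "wasserstein_pow p (distr N borel h1) (distr N borel h2) \<le> ennreal (K powr p)"
proof -
  have h12: "(\<lambda>x. (h1 x, h2 x)) \<in> borel_measurable N"
    using fin_dim_space_measurable_Pair assms(1) h by blast
  have "(\<lambda>z::'y \<times> 'y. norm (fst z - snd z)) \<in> borel_measurable borel"
    by (intro borel_measurable_continuous_onI continuous_intros)
  then have cost: "(\<lambda>z::'y \<times> 'y. ennreal (norm (fst z - snd z) powr p)) \<in> borel_measurable borel"
    using measurable_compose[OF powr_real_measurable[OF _ measurable_const] measurable_ennreal] by simp
  have "wasserstein_pow p (distr N borel h1) (distr N borel h2)
      \<le> \<integral>\<^sup>+ z. ennreal (norm (fst z - snd z) powr p) \<partial>distr N borel (\<lambda>x. (h1 x, h2 x))"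
    unfolding wasserstein_pow_def by (rule INF_lower[OF distr_Pair_in_couplings[OF N h12]])
  also have "\<dots> = \<integral>\<^sup>+ x. ennreal (norm (h1 x - h2 x) powr p) \<partial>N"
    using cost by (simp add: nn_integral_distr[OF h12])
  also have "\<dots> \<le> \<integral>\<^sup>+ x. ennreal (K powr p) \<partial>N"
    using K p by (intro nn_integral_mono ennreal_leI powr_mono2) auto
  also have "\<dots> = ennreal (K powr p)"
    using prob_space.emeasure_space_1[OF N] by simp
  finally show ?thesis .
qed

lemma intermediate_measurable:
  assumes "fin_dim_space TYPE('xt::real_normed_vector)" "fin_dim_space TYPE('ys::real_normed_vector)"
    and "tx \<in> borel_measurable borel" "ty \<in> borel_measurable borel" "f \<in> borel_measurable borel"
  shows "intermediate tx (ty :: 'xt \<times> 'ys \<Rightarrow> 'yt::topological_space) f \<in> borel_measurable borel"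
proof -
  have "(\<lambda>x. (x, f (tx x))) \<in> borel_measurable borel"
    using fin_dim_space_measurable_Pair[OF assms(1,2) measurable_ident_sets[OF refl]
        measurable_compose[OF assms(3,5)]] .
  then show ?thesis
    unfolding intermediate_def using assms(4) by (rule measurable_compose)
qed

lemma norm_intermediate_diff_le:
  assumes ty: "\<forall>x1 y1 x2 y2. norm (ty (x1, y1) - ty (x2, y2)) \<le> L * (norm (x1 - x2) + norm (y1 - y2))"
    and "L \<ge> 0" and fg: "\<And>y. norm (f y - g y) \<le> d"
  shows "norm (intermediate tx ty f x - intermediate tx ty g x) \<le> L * d"
proof -
  have "norm (intermediate tx ty f x - intermediate tx ty g x)
      \<le> L * (norm (x - x) + norm (f (tx x) - g (tx x)))"
    unfolding intermediate_def using ty by blast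
  also have "\<dots> \<le> L * d" using fg[of "tx x"] \<open>L \<ge> 0\<close> by (simp add: mult_left_mono)
  finally show ?thesis .
qed

lemma wasserstein_pow_intermediate_le:
  assumes fd: "fin_dim_space TYPE('xt::real_normed_vector)" "fin_dim_space TYPE('ys::real_normed_vector)"
      "fin_dim_space TYPE('yt::real_normed_vector)"
    and \<nu>: "\<nu> \<in> prob_measures"
    and meas: "tx \<in> borel_measurable borel" "ty \<in> borel_measurable borel"
      "f \<in> borel_measurable borel" "g \<in> borel_measurable borel"
    and ty: "\<forall>x1 y1 x2 y2. norm (ty (x1, y1) - ty (x2, y2)) \<le> L * (norm (x1 - x2) + norm (y1 - y2))"
    and "L \<ge> 0" "d \<ge> 0" "p \<ge> 0" and fg: "\<And>y. norm (f y - g y) \<le> d"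
  shows "wasserstein_pow p (distr \<nu> borel (intermediate tx ty f))
           (distr \<nu> borel (intermediate tx (ty :: 'xt \<times> 'ys \<Rightarrow> 'yt) g)) \<le> ennreal ((L * d) powr p)"
proof (rule wasserstein_pow_distr_le[OF fd(3)])
  have "sets \<nu> = sets borel" "prob_space \<nu>" using \<nu> unfolding prob_measures_def by auto
  then show "prob_space \<nu>"
    and "intermediate tx ty f \<in> borel_measurable \<nu>" "intermediate tx ty g \<in> borel_measurable \<nu>"
    using intermediate_measurable[OF fd(1,2) meas(1,2)] meas(3,4) measurable_cong_sets by auto
  show "norm (intermediate tx ty f x - intermediate tx ty g x) \<le> L * d" for x
    by (rule norm_intermediate_diff_le[OF ty \<open>L \<ge> 0\<close> fg])
qed (use \<open>L \<ge> 0\<close> \<open>d \<ge> 0\<close> \<open>p \<ge> 0\<close> in auto)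

lemma norm_le_d_M:
  assumes "d_M M f g < M"
  shows "norm (f x - g x) \<le> d_M M f g"
proof -
  define S where "S = (SUP x. ennreal (norm (f x - g x)))"
  have "M > 0" using assms enn2real_nonneg unfolding d_M_def by (meson le_less_trans)
  have "S < ennreal M"
  proof (rule ccontr)
    assume "\<not> S < ennreal M"
    then have "d_M M f g = M"
      unfolding d_M_def S_def[symmetric] using \<open>M > 0\<close> by (simp add: min_def not_less)
    then show False using assms by simp
  qed
  then have "S < \<top>" by (simp add: order_less_le_trans)
  with \<open>S < ennreal M\<close> have "ennreal (d_M M f g) = S"
    unfolding d_M_def S_def[symmetric] by (simp add: ennreal_enn2real_if)
  moreover have "ennreal (norm (f x - g x)) \<le> S" unfolding S_def by (rule SUP_upper) simp
  ultimately have "ennreal (norm (f x - g x)) \<le> ennreal (d_M M f g)" by simp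
  then show ?thesis by (subst (asm) ennreal_le_iff) (auto simp: d_M_def)
qed

lemma abs_INF_diff_le:
  fixes F G :: "'t \<Rightarrow> real"
  assumes "bdd_below (F ` S)" "bdd_below (G ` S)"
    and FG: "\<And>t. t \<in> S \<Longrightarrow> \<bar>F t - G t\<bar> \<le> c" and "c \<ge> 0"
  shows "\<bar>(INF t\<in>S. F t) - (INF t\<in>S. G t)\<bar> \<le> c"
proof (cases "S = {}")
  case False
  have "(INF t\<in>S. G t) - c \<le> (INF t\<in>S. F t)"
    using cINF_lower[OF assms(2)] FG by (intro cINF_greatest False) (force simp: abs_le_iff)
  moreover have "(INF t\<in>S. F t) - c \<le> (INF t\<in>S. G t)"
    using cINF_lower[OF assms(1)] FG by (intro cINF_greatest False) (force simp: abs_le_iff)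
  ultimately show ?thesis by linarith
qed (use \<open>c \<ge> 0\<close> in simp)

lemma powr_small_near_zero:
  fixes K p c :: real
  assumes "K > 0" "p > 0" "c > 0"
  shows "\<exists>\<delta>>0. \<forall>d. 0 \<le> d \<and> d < \<delta> \<longrightarrow> K * d powr p \<le> c"
proof (intro exI conjI allI impI)
  show "(c / K) powr (1 / p) > 0" using assms by simp
  fix d assume d: "0 \<le> d \<and> d < (c / K) powr (1 / p)"
  then have "d powr p \<le> ((c / K) powr (1 / p)) powr p"
    using assms by (intro powr_mono2) auto
  also have "\<dots> = c / K" using assms by (simp add: powr_powr)
  finally show "K * d powr p \<le> c" using assms by (simp add: field_simps)
qed

lemma metric_axioms_imp_nonneg:
  assumes "\<forall>a\<in>P. \<forall>b\<in>P. D a b = 0 \<longleftrightarrow> a = b" "\<forall>a\<in>P. \<forall>b\<in>P. D a b = D b a"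
    and "\<forall>a\<in>P. \<forall>b\<in>P. \<forall>c\<in>P. D a c \<le> D a b + D b c" and "a \<in> P" "b \<in> P"
  shows "D a b \<ge> (0::real)"
proof -
  have "D a a \<le> D a b + D b a" "D a a = 0" "D b a = D a b" using assms by blast+
  then show ?thesis by linarith
qed

lemma le_of_ennreal_le_mult:
  assumes "ennreal x \<le> ennreal a * w" "w \<le> ennreal b" "a \<ge> 0" "b \<ge> 0"
  shows "x \<le> a * b"
proof -
  have "ennreal x \<le> ennreal (a * b)"
    using assms by (metis ennreal_mult mult_left_mono order_trans zero_le)
  then show ?thesis using assms by (simp add: ennreal_le_iff)
qed

lemma transfer_risk_diff_le:
  fixes f g :: "'xs::topological_space \<Rightarrow> 'ys"
    and TYs :: "('xt::topological_space \<times> 'ys \<Rightarrow> 'yt) set"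
  assumes C_nonneg: "\<forall>a b. a \<ge> 0 \<longrightarrow> b \<ge> 0 \<longrightarrow> C a b \<ge> 0"
    and C_lip: "\<forall>a b a' b'. \<bar>C a b - C a' b'\<bar> \<le> L_C * (\<bar>a - a'\<bar> + \<bar>b - b'\<bar>)"
    and D_nonneg: "\<And>tx. tx \<in> TXs \<Longrightarrow> D (distr \<nu> borel tx) \<mu> \<ge> 0"
    and EO_nonneg: "\<And>tx ty. tx \<in> TXs \<Longrightarrow> ty \<in> TYs \<Longrightarrow>
        EO (intermediate tx ty f) \<ge> 0 \<and> EO (intermediate tx ty g) \<ge> 0"
    and EO_diff: "\<And>tx ty. tx \<in> TXs \<Longrightarrow> ty \<in> TYs \<Longrightarrow>
        \<bar>EO (intermediate tx ty f) - EO (intermediate tx ty g)\<bar> \<le> c"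
    and "L_C \<ge> 0" "c \<ge> 0"
  shows "\<bar>transfer_risk C EO D \<nu> TXs TYs \<mu> f - transfer_risk C EO D \<nu> TXs TYs \<mu> g\<bar> \<le> L_C * c"
proof -
  define F where "F h tt = C (EO (intermediate (fst tt) (snd tt) h)) (D (distr \<nu> borel (fst tt)) \<mu>)"
    for h :: "'xs \<Rightarrow> 'ys" and tt
  \<comment> \<open>Nonnegativity only serves here: the infimum of a real set unbounded below is junk.\<close>
  have "bdd_below (F h ` (TXs \<times> TYs))" if "h \<in> {f, g}" for h
    using that C_nonneg D_nonneg EO_nonneg by (intro bdd_belowI2[of _ 0]) (auto simp: F_def)
  moreover have "\<bar>F f tt - F g tt\<bar> \<le> L_C * c" if tt_in: "tt \<in> TXs \<times> TYs" for tt
  proof -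
    obtain tx ty where tt: "tt = (tx, ty)" "tx \<in> TXs" "ty \<in> TYs" using tt_in by blast
    have "\<bar>F f tt - F g tt\<bar> \<le> L_C * (\<bar>EO (intermediate tx ty f) - EO (intermediate tx ty g)\<bar>
        + \<bar>D (distr \<nu> borel tx) \<mu> - D (distr \<nu> borel tx) \<mu>\<bar>)"
      unfolding F_def tt(1) using C_lip by (simp only: fst_conv snd_conv)
    also have "\<dots> \<le> L_C * c" using EO_diff[OF tt(2,3)] \<open>L_C \<ge> 0\<close> by (simp add: mult_left_mono)
    finally show ?thesis .
  qed
  moreover have "transfer_risk C EO D \<nu> TXs TYs \<mu> h = (INF tt\<in>TXs \<times> TYs. F h tt)" for h
    unfolding transfer_risk_def F_def by simp
  ultimately show ?thesis using \<open>L_C \<ge> 0\<close> \<open>c \<ge> 0\<close> by (simp add: abs_INF_diff_le)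
qed

theorem mainTheorem3:
  fixes \<nu>T :: "'xt::real_normed_vector measure"
    and AS :: "('xs::real_normed_vector \<Rightarrow> 'ys::real_normed_vector) set"
    and AT :: "('xt \<Rightarrow> 'yt::real_normed_vector) set"
    and fT :: "'xt \<Rightarrow> 'yt"
    and TXs :: "('xt \<Rightarrow> 'xs) set" and TYs :: "('xt \<times> 'ys \<Rightarrow> 'yt) set"
    and EO :: "('xt \<Rightarrow> 'yt) \<Rightarrow> real"
    and D :: "'xs measure \<Rightarrow> 'xs measure \<Rightarrow> real"
    and C :: "real \<Rightarrow> real \<Rightarrow> real"
    and L_C L L' p M :: real
    and \<mu> :: "'xs measure"
  assumes fd: "fin_dim_space TYPE('xt)" "fin_dim_space TYPE('xs)"
              "fin_dim_space TYPE('ys)" "fin_dim_space TYPE('yt)"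
    and \<nu>T: "\<nu>T \<in> prob_measures"
    and fT: "fT \<in> AT" "fT \<in> borel_measurable borel"
    and AS_meas: "\<forall>f\<in>AS. f \<in> borel_measurable borel"
    and TX_meas: "\<forall>tx\<in>TXs. tx \<in> borel_measurable borel"
    and TY_meas: "\<forall>ty\<in>TYs. ty \<in> borel_measurable borel"
    and inter_AT: "\<forall>tx\<in>TXs. \<forall>ty\<in>TYs. \<forall>f\<in>AS. intermediate tx ty f \<in> AT"
    and EO_nonneg: "\<forall>h\<in>AT. EO h \<ge> 0"
    and EO_zero: "\<forall>tx\<in>TXs. \<forall>ty\<in>TYs. \<forall>f\<in>AS.
        EO (intermediate tx ty f) = 0 \<longleftrightarrow> distr \<nu>T borel (intermediate tx ty f) = distr \<nu>T borel fT"
    and D_metric: "\<forall>a\<in>prob_measures. \<forall>b\<in>prob_measures. D a b = 0 \<longleftrightarrow> a = b"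
        "\<forall>a\<in>prob_measures. \<forall>b\<in>prob_measures. D a b = D b a"
        "\<forall>a\<in>prob_measures. \<forall>b\<in>prob_measures. \<forall>c\<in>prob_measures. D a c \<le> D a b + D b c"
    and C00: "C 0 0 = 0"
    and C_nonneg: "\<forall>a b. a \<ge> 0 \<longrightarrow> b \<ge> 0 \<longrightarrow> C a b \<ge> 0"
    and C_mono1: "\<forall>a a' b. a \<le> a' \<longrightarrow> C a b \<le> C a' b"
    and C_mono2: "\<forall>a b b'. b \<le> b' \<longrightarrow> C a b \<le> C a b'"
    and C_lip: "L_C > 0" "\<forall>a b a' b'. \<bar>C a b - C a' b'\<bar> \<le> L_C * (\<bar>a - a'\<bar> + \<bar>b - b'\<bar>)"
    and TY_lip: "L > 0" "\<forall>ty\<in>TYs. \<forall>x1 y1 x2 y2.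
        norm (ty (x1, y1) - ty (x2, y2)) \<le> L * (norm (x1 - x2) + norm (y1 - y2))"
    and EO_lip: "L' > 0" "p \<ge> 1"
        "\<forall>tx1\<in>TXs. \<forall>ty1\<in>TYs. \<forall>f1\<in>AS. \<forall>tx2\<in>TXs. \<forall>ty2\<in>TYs. \<forall>f2\<in>AS.
           ennreal \<bar>EO (intermediate tx1 ty1 f1) - EO (intermediate tx2 ty2 f2)\<bar>
             \<le> ennreal L' * wasserstein_pow p (distr \<nu>T borel (intermediate tx1 ty1 f1))
                                              (distr \<nu>T borel (intermediate tx2 ty2 f2))"
    and M: "M > 0"
    and \<mu>: "\<mu> \<in> prob_measures"
  shows "\<forall>f\<in>AS. \<forall>\<epsilon>>0. \<exists>\<delta>>0. \<forall>g\<in>AS. d_M M f g < \<delta> \<longrightarrow>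
           \<bar>transfer_risk C EO D \<nu>T TXs TYs \<mu> g - transfer_risk C EO D \<nu>T TXs TYs \<mu> f\<bar> < \<epsilon>"
proof (intro ballI allI impI)
  fix f \<epsilon> assume f: "f \<in> AS" and \<epsilon>: "(\<epsilon>::real) > 0"
  have D_nonneg: "D (distr \<nu>T borel tx) \<mu> \<ge> 0" if "tx \<in> TXs" for tx
    using metric_axioms_imp_nonneg[OF D_metric distr_in_prob_measures[OF \<nu>T] \<mu>] TX_meas that by blast
  obtain \<delta>0 where \<delta>0: "\<delta>0 > 0"
    and small: "\<And>d. 0 \<le> d \<Longrightarrow> d < \<delta>0 \<Longrightarrow> L_C * L' * d powr p \<le> \<epsilon> / 2"
    using powr_small_near_zero[of "L_C * L'" p "\<epsilon> / 2"] C_lip(1) EO_lip(1,2) \<epsilon> by auto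
  show "\<exists>\<delta>>0. \<forall>g\<in>AS. d_M M f g < \<delta> \<longrightarrow>
           \<bar>transfer_risk C EO D \<nu>T TXs TYs \<mu> g - transfer_risk C EO D \<nu>T TXs TYs \<mu> f\<bar> < \<epsilon>"
  proof (intro exI[of _ "min M (\<delta>0 / L)"] conjI ballI impI)
    show "min M (\<delta>0 / L) > 0" using M \<delta>0 TY_lip(1) by simp
    fix g assume g: "g \<in> AS" and fg: "d_M M f g < min M (\<delta>0 / L)"
    define d where "d = d_M M f g"
    have "d \<ge> 0" "L * d < \<delta>0" using fg TY_lip(1) by (auto simp: d_def d_M_def field_simps)
    have "norm (g y - f y) \<le> d" for y
      using norm_le_d_M[of M f g y] fg by (simp add: d_def norm_minus_commute)
    then have "\<bar>EO (intermediate tx ty g) - EO (intermediate tx ty f)\<bar> \<le> L' * (L * d) powr p"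
      if "tx \<in> TXs" "ty \<in> TYs" for tx ty
      using that f g EO_lip AS_meas TX_meas TY_meas TY_lip \<nu>T \<open>d \<ge> 0\<close>
      by (intro le_of_ennreal_le_mult[OF _
            wasserstein_pow_intermediate_le[where f = g and g = f, OF fd(1,3,4)]]) auto
    then have "\<bar>transfer_risk C EO D \<nu>T TXs TYs \<mu> g - transfer_risk C EO D \<nu>T TXs TYs \<mu> f\<bar>
        \<le> L_C * (L' * (L * d) powr p)"
      using f g inter_AT EO_nonneg C_lip EO_lip(1) TY_lip(1) D_nonneg
      by (intro transfer_risk_diff_le[OF C_nonneg C_lip(2)]) auto
    also have "\<dots> \<le> \<epsilon> / 2"
      using small[of "L * d"] \<open>d \<ge> 0\<close> \<open>L * d < \<delta>0\<close> TY_lip(1) by (simp add: mult.assoc)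
    finally show "\<bar>transfer_risk C EO D \<nu>T TXs TYs \<mu> g - transfer_risk C EO D \<nu>T TXs TYs \<mu> f\<bar> < \<epsilon>"
      using \<epsilon> by linarith
  qed
qed

end
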